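(* Let $\widehat M$ be a cooperative Markov game with MMDP $M$, $(S_{target},S_{avoid})$ a reach-avoid objective, and $(\pi_{comm},\pi_{act})\in\Pi^{pos}_{comm}(\mathcal O,K)\times\Pi^{pos}_{act}(M)$, and assume all occupancy measures $\nu_{s,a}$ ($s\notin\mathcal T$) of the full-communication process are finite. Then for every agent $i\in[N]$ and every $c\in\mathcal A_{comm}$, $$G^i\le\bar G^i\quad\text{and}\quad G^c\le\bar G^c,$$ where $\bar G^i=-\sum_{o,l^i,a^i}\nu_{o,l^i,a^i}\,w'(o,i)\log\frac{\nu_{o,l^i,a^i}}{\sum_{b^i\in\mathcal A^i}\nu_{o,l^i,b^i}}-\sum_{o,l^i,a^i,o^i_1,l^i_1}\nu_{o,l^i,a^i}\,w'(o,i)\,P^i((o^i,l^i),a^i)((o^i_1,l^i_1))\log P^i((o^i,l^i),a^i)((o^i_1,l^i_1))$, $\bar G^c=-\sum_{o,l^c,a^c}\nu_{o,l^c,a^c}\,w''(o,c)\log\frac{\nu_{o,l^c,a^c}}{\sum_{b^c\in\mathcal A^c}\nu_{o,l^c,b^c}}-\sum_{o,l^c,a^c,o^c_1,l^c_1}\nu_{o,l^c,a^c}\,w''(o,c)\,P^c((o^c,l^c),a^c)((o^c_1,l^c_1))\log P^c((o^c,l^c),a^c)((o^c_1,l^c_1))$.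
   Context: MMDP: there are $N\ge1$ agents, identified with $[N]=\{1,\dots,N\}$. Agent $i$ has a finite local state set $\mathcal S^i$, finite local action set $\mathcal A^i$, local transition function $P^i:\mathcal S^i\times\mathcal A^i\to\Delta(\mathcal S^i)$ and initial local state $s^i_{init}$. Joint states $\mathcal S=\prod_i\mathcal S^i$, joint actions $\mathcal A=\prod_i\mathcal A^i$, joint transitions $P(s,a)(u)=\prod_{i}P^i(s^i,a^i)(u^i)$, initial state $s_{init}=(s^1_{init},\dots,s^N_{init})$. A positional joint action policy is a map $\pi_{act}:\mathcal S\to\Delta(\mathcal A)$; $\Pi^{pos}_{act}(M)$ is the set of these. Cooperative Markov game $\widehat M=(M,\mathcal O^1,\dots,\mathcal O^N,\mathcal L^1,\dots,\mathcal L^N,K)$: each $\mathcal S^i=\mathcal O^i\times\mathcal L^i$ (public part $o^i$, local part $l^i$); $\mathcal O=\prod_i\mathcal O^i$, $\mathcal L=\prod_i\mathcal L^i$, and a joint state is written $s=(o,l)$. For $c\subseteq[N]$, $\mathcal O^c=\prod_{j\in c}\mathcal O^j$, $\mathcal L^c=\prod_{j\in c}\mathcal L^j$, $\mathcal A^c=\prod_{j\in c}\mathcal A^j$, $o^c,l^c,a^c$ denote restrictions to coordinates in $c$, and $P^c((o^c,l^c),a^c)((o^c_1,l^c_1))=\prod_{j\in c}P^j((o^j,l^j),a^j)((o^j_1,l^j_1))$. $K\in\{0,\dots,N\}$ and $\mathcal A_{comm}$ is the set of subsets of $[N]$ of size $K$ (so $\mathcal A_{comm}=\{\emptyset\}$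 if $K=0$). A positional communication policy is a map $\pi_{comm}:\mathcal O\to\Delta(\mathcal A_{comm})$; $\Pi^{pos}_{comm}(\mathcal O,K)$ is the set of these. Reach-avoid objective: disjoint sets $S_{target},S_{avoid}\subseteq\mathcal S$; put $\mathcal T=S_{target}\cup S_{avoid}$. Full-communication process $M_{\pi_{act}}$: random sequence $S_0=s_{init},A_1,S_1,A_2,S_2,\dots$ with $\mathbb P(A_t=a,S_t=s'\mid S_0,A_1,\dots,S_{t-1}=s)=\pi_{act}(s)(a)P(s,a)(s')$. Write $S_t=(O_t,L_t)$ and $A^c_t,O^c_t,L^c_t$ (resp. $A^i_t,O^i_t,L^i_t$) for components in $c$ (resp. $i$). The process is regarded as stopped upon entering $\mathcal T$: with $E_{t}=\{S_0,\dots,S_{t}\notin\mathcal T\}$, every probability of an event concerning times $t-1,t$ is the probability of that event intersected with $E_{t-1}$, and conditional probabilities condition on the conditioning event intersected with $E_{t-1}$. For $c\subseteq[N]$ and $t\ge1$ let $q^c_t(a^c,o^c_1,l^c_1\mid o,l^c)=\mathbb P(A^c_t=a^c,O^c_t=o^c_1,L^c_t=l^c_1\mid O_{t-1}=o,L^c_{t-1}=l^c,E_{t-1})$ (write $q^i_t$ for $c=\{i\}$). Weights: $w'(o,i)=\sum_{c\in\mathcal A_{comm},\,i\notin c}\pi_{comm}(o)(c)$ and $w''(o,c)=\pi_{comm}(o)(c)$. $G^i=\sum_{t\ge1}\sum_{o\in\mathcal O,l^i\in\mathcal L^i}w'(o,i)\,\mathbb P(O_{t-1}=o,L^i_{t-1}=l^i,E_{t-1})\Big(-\sum_{a^i,o^i_1,l^i_1}q^i_t\log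 q^i_t\Big)$ with $q^i_t=q^i_t(a^i,o^i_1,l^i_1\mid o,l^i)$; $G^c=\sum_{t\ge1}\sum_{o\in\mathcal O,l^c\in\mathcal L^c}w''(o,c)\,\mathbb P(O_{t-1}=o,L^c_{t-1}=l^c,E_{t-1})\Big(-\sum_{a^c,o^c_1,l^c_1}q^c_t\log q^c_t\Big)$. Occupancy measures: $\nu_{s,a}=\sum_{t\ge1}\mathbb P(S_{t-1}=s,A_t=a,E_{t-1})$ for $s\notin\mathcal T$; marginals $\nu_{o,l^c,a^c}=\sum\nu_{(o,l),a}$ over all $l\in\mathcal L$ with restriction $l^c$ and $(o,l)\notin\mathcal T$, and all $a\in\mathcal A$ with restriction $a^c$ ($\nu_{o,l^i,a^i}$ for $c=\{i\}$). Conventions: $0\log0=0$; summands with $\nu=0$ are $0$. *)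

theory Defs
  imports "HOL-Probability.Probability"
begin

(* Agent i has public-part carrier Ob i, local-part carrier Lc i,
   action carrier Ac i (all finite), and local transition Pt i :: ('o x 'l) => 'a => ('o x 'l) pmf.
   Restriction to a coalition c is 'restrict _ c'. *)

type_synonym ('o,'l) jstate = "(nat \<Rightarrow> 'o) \<times> (nat \<Rightarrow> 'l)"

definition agents :: "nat \<Rightarrow> nat set" where
  "agents N = {1..N}"

definition jstates :: "nat \<Rightarrow> (nat \<Rightarrow> 'o set) \<Rightarrow> (nat \<Rightarrow> 'l set) \<Rightarrow> ('o,'l) jstate set" where
  "jstates N Ob Lc = PiE (agents N) Ob \<times> PiE (agents N) Lc"

definition jacts :: "nat \<Rightarrow> (nat \<Rightarrow> 'a set) \<Rightarrow> (nat \<Rightarrow> 'a) set" where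
  "jacts N Ac = PiE (agents N) Ac"

definition Acomm :: "nat \<Rightarrow> nat \<Rightarrow> nat set set" where
  "Acomm N K = {c. c \<subseteq> agents N \<and> card c = K}"

definition Pcoal :: "(nat \<Rightarrow> 'o \<times> 'l \<Rightarrow> 'a \<Rightarrow> ('o \<times> 'l) pmf) \<Rightarrow> nat set
    \<Rightarrow> ('o,'l) jstate \<Rightarrow> (nat \<Rightarrow> 'a) \<Rightarrow> ('o,'l) jstate \<Rightarrow> real" where
  "Pcoal Pt c s a s1 = (\<Prod>j\<in>c. pmf (Pt j (fst s j, snd s j) (a j)) (fst s1 j, snd s1 j))"

definition jtrans :: "nat \<Rightarrow> (nat \<Rightarrow> 'o \<times> 'l \<Rightarrow> 'a \<Rightarrow> ('o \<times> 'l) pmf)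
    \<Rightarrow> ('o,'l) jstate \<Rightarrow> (nat \<Rightarrow> 'a) \<Rightarrow> ('o,'l) jstate \<Rightarrow> real" where
  "jtrans N Pt s a s1 = Pcoal Pt (agents N) s a s1"

text \<open>Stopped full-communication process: palpha ... n s = P(S_n = s, E_n)
  where E_n = {S_0,...,S_n not in T}.\<close>
primrec palpha :: "nat \<Rightarrow> (nat \<Rightarrow> 'o set) \<Rightarrow> (nat \<Rightarrow> 'l set) \<Rightarrow> (nat \<Rightarrow> 'a set)
    \<Rightarrow> (nat \<Rightarrow> 'o \<times> 'l \<Rightarrow> 'a \<Rightarrow> ('o \<times> 'l) pmf) \<Rightarrow> ('o,'l) jstate \<Rightarrow> ('o,'l) jstate set
    \<Rightarrow> (('o,'l) jstate \<Rightarrow> (nat \<Rightarrow> 'a) pmf) \<Rightarrow> nat \<Rightarrow> ('o,'l) jstate \<Rightarrow> real" where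
  "palpha N Ob Lc Ac Pt sinit T pia 0 s = (if s = sinit \<and> s \<notin> T then 1 else 0)"
| "palpha N Ob Lc Ac Pt sinit T pia (Suc n) s1 =
     (if s1 \<notin> T then
        (\<Sum>s\<in>jstates N Ob Lc. \<Sum>a\<in>jacts N Ac.
            palpha N Ob Lc Ac Pt sinit T pia n s * pmf (pia s) a * jtrans N Pt s a s1)
      else 0)"

text \<open>pjoint ... n s a s1 = P(S_n = s, A_{n+1} = a, S_{n+1} = s1, E_n).\<close>
definition pjoint where
  "pjoint N Ob Lc Ac Pt sinit T pia n s a s1 =
     palpha N Ob Lc Ac Pt sinit T pia n s * pmf (pia s) a * jtrans N Pt s a s1"

text \<open>occ ... n s a = P(S_n = s, A_{n+1} = a, E_n); occupancy measure nu_{s,a} is its sum over n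
  (i.e. over t = n+1 >= 1).\<close>
definition occ where
  "occ N Ob Lc Ac Pt sinit T pia n s a = palpha N Ob Lc Ac Pt sinit T pia n s * pmf (pia s) a"

definition occupancy where
  "occupancy N Ob Lc Ac Pt sinit T pia s a = (\<Sum>n. occ N Ob Lc Ac Pt sinit T pia n s a)"

definition occ_marg where
  "occ_marg N Ob Lc Ac Pt sinit T pia c u lc ac =
     (\<Sum>l\<in>{l\<in>PiE (agents N) Lc. restrict l c = lc \<and> (u,l) \<notin> T}.
        \<Sum>a\<in>{a\<in>jacts N Ac. restrict a c = ac}.
          occupancy N Ob Lc Ac Pt sinit T pia (u,l) a)"

definition pden where
  "pden N Ob Lc Ac Pt sinit T pia c n u lc =
     (\<Sum>l\<in>{l\<in>PiE (agents N) Lc. restrict l c = lc}. palpha N Ob Lc Ac Pt sinit T pia n (u,l))"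

definition pnum where
  "pnum N Ob Lc Ac Pt sinit T pia c n u lc ac o1c l1c =
     (\<Sum>l\<in>{l\<in>PiE (agents N) Lc. restrict l c = lc}.
       \<Sum>a\<in>{a\<in>jacts N Ac. restrict a c = ac}.
        \<Sum>s1\<in>{s1\<in>jstates N Ob Lc. restrict (fst s1) c = o1c \<and> restrict (snd s1) c = l1c}.
          pjoint N Ob Lc Ac Pt sinit T pia n (u,l) a s1)"

definition qcond where
  "qcond N Ob Lc Ac Pt sinit T pia c n u lc ac o1c l1c =
     pnum N Ob Lc Ac Pt sinit T pia c n u lc ac o1c l1c / pden N Ob Lc Ac Pt sinit T pia c n u lc"

definition qentropy where
  "qentropy N Ob Lc Ac Pt sinit T pia c n u lc =
     - (\<Sum>ac\<in>PiE c Ac. \<Sum>o1c\<in>PiE c Ob. \<Sum>l1c\<in>PiE c Lc.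
          qcond N Ob Lc Ac Pt sinit T pia c n u lc ac o1c l1c
          * ln (qcond N Ob Lc Ac Pt sinit T pia c n u lc ac o1c l1c))"

text \<open>G with coalition c and weight w :: public joint state => real (time index t = n+1 >= 1).
  The sum over t of nonnegative terms is taken in ennreal (it may a priori be infinite).\<close>
definition Gval where
  "Gval N Ob Lc Ac Pt sinit T pia c w =
     (\<Sum>n. ennreal (\<Sum>u\<in>PiE (agents N) Ob. \<Sum>lc\<in>PiE c Lc.
        w u * pden N Ob Lc Ac Pt sinit T pia c n u lc * qentropy N Ob Lc Ac Pt sinit T pia c n u lc))"

definition Gbar where
  "Gbar N Ob Lc Ac Pt sinit T pia c w =
     - (\<Sum>u\<in>PiE (agents N) Ob. \<Sum>lc\<in>PiE c Lc. \<Sum>ac\<in>PiE c Ac.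
          occ_marg N Ob Lc Ac Pt sinit T pia c u lc ac * w u
          * ln (occ_marg N Ob Lc Ac Pt sinit T pia c u lc ac
                / (\<Sum>bc\<in>PiE c Ac. occ_marg N Ob Lc Ac Pt sinit T pia c u lc bc)))
     - (\<Sum>u\<in>PiE (agents N) Ob. \<Sum>lc\<in>PiE c Lc. \<Sum>ac\<in>PiE c Ac. \<Sum>o1c\<in>PiE c Ob. \<Sum>l1c\<in>PiE c Lc.
          occ_marg N Ob Lc Ac Pt sinit T pia c u lc ac * w u
          * Pcoal Pt c (u,lc) ac (o1c,l1c) * ln (Pcoal Pt c (u,lc) ac (o1c,l1c)))"

definition wprime :: "nat \<Rightarrow> nat \<Rightarrow> ((nat \<Rightarrow> 'o) \<Rightarrow> nat set pmf) \<Rightarrow> (nat \<Rightarrow> 'o) \<Rightarrow> nat \<Rightarrow> real" where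
  "wprime N K pic u i = (\<Sum>c\<in>{c\<in>Acomm N K. i \<notin> c}. pmf (pic u) c)"

definition wdprime :: "((nat \<Rightarrow> 'o) \<Rightarrow> nat set pmf) \<Rightarrow> (nat \<Rightarrow> 'o) \<Rightarrow> nat set \<Rightarrow> real" where
  "wdprime pic u c = pmf (pic u) c"

end

theory Submission
  imports Defs
begin

text \<open>Write H(x) = - \<Sum>_a x_a ln (x_a / \<Sum>_b x_b) for the entropy of a nonnegative vector x
  scaled by its mass. By the chain rule, P(O_(t-1) = o, L^c_(t-1) = l^c, E_(t-1)) times the entropy
  of q^c_t is H(x_t) + \<Sum>_a x_t(a) h(a), where x_t(a) = P(O_(t-1) = o, L^c_(t-1) = l^c, A^c_t = a, E_(t-1))
  and h(a) is the entropy of the coalition kernel P^c((o^c, l^c), a). The x_t sum over t to the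
  occupancy marginal \<nu>_(o,l^c,-). As H is superadditive (log-sum inequality) and monotone,
  \<Sum>_t H(x_t) \<le> H(\<nu>_(o,l^c,-)), while the transition terms add up to \<Sum>_a \<nu>_(o,l^c,a) h(a).
  Weighting with w(o) \<ge> 0 and summing over (o, l^c) gives G-bar.\<close>

definition unnorm_entropy :: "'b set \<Rightarrow> ('b \<Rightarrow> real) \<Rightarrow> real" where
  "unnorm_entropy S x = - (\<Sum>a\<in>S. x a * ln (x a / sum x S))"

lemma mult_ln_div_lower_bound:
  fixes x X r :: real
  assumes "0 \<le> x" "x \<le> X" "0 < r"
  shows "x * ln r + x - r * X \<le> x * ln (x / X)"
proof (cases "x = 0")
  case True
  then show ?thesis using assms by simp
next
  case False
  with assms have "0 < x" "0 < X" by auto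
  have "ln r - ln (x / X) = ln (r * X / x)"
    using \<open>0 < x\<close> \<open>0 < X\<close> \<open>0 < r\<close> by (simp add: ln_div ln_mult)
  also have "\<dots> \<le> r * X / x - 1"
    using \<open>0 < x\<close> \<open>0 < X\<close> \<open>0 < r\<close> by (intro ln_le_minus_one) simp
  finally have "x * (ln r - ln (x / X)) \<le> x * (r * X / x - 1)"
    using \<open>0 < x\<close> by (intro mult_left_mono) auto
  also have "\<dots> = r * X - x"
    using \<open>0 < x\<close> by (simp add: field_simps)
  finally show ?thesis
    by (simp add: right_diff_distrib)
qed

lemma log_sum_inequality2:
  fixes x y X Y :: real
  assumes "0 \<le> x" "x \<le> X" "0 \<le> y" "y \<le> Y"
  shows "(x + y) * ln ((x + y) / (X + Y)) \<le> x * ln (x / X) + y * ln (y / Y)"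
proof (cases "x + y = 0")
  case True
  with assms have "x = 0" "y = 0" by auto
  then show ?thesis by simp
next
  case False
  \<comment> \<open>Apply the tangent bound to both terms at the common ratio \<open>r\<close>; the bounds add up to the left side.\<close>
  define r where "r = (x + y) / (X + Y)"
  have "0 < r" "r * (X + Y) = x + y"
    using False assms by (auto simp: r_def)
  then have "(x + y) * ln r = (x * ln r + x - r * X) + (y * ln r + y - r * Y)"
    by (simp add: algebra_simps)
  also have "\<dots> \<le> x * ln (x / X) + y * ln (y / Y)"
    using assms \<open>0 < r\<close> by (intro add_mono mult_ln_div_lower_bound)
  finally show ?thesis by (simp add: r_def)
qed

lemma unnorm_entropy_nonneg:
  assumes "finite S" "\<And>a. a \<in> S \<Longrightarrow> 0 \<le> x a"
  shows "0 \<le> unnorm_entropy S x"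
proof -
  have "x a * ln (x a / sum x S) \<le> 0" if "a \<in> S" for a
  proof (cases "x a = 0")
    case False
    with assms that have "0 < x a" "x a \<le> sum x S"
      by (auto intro: member_le_sum simp: order_less_le)
    then show ?thesis by (simp add: mult_nonneg_nonpos)
  qed simp
  then show ?thesis
    unfolding unnorm_entropy_def by (simp add: sum_nonpos)
qed

lemma unnorm_entropy_superadditive:
  assumes "finite S" "\<And>a. a \<in> S \<Longrightarrow> 0 \<le> x a" "\<And>a. a \<in> S \<Longrightarrow> 0 \<le> y a"
  shows "unnorm_entropy S x + unnorm_entropy S y \<le> unnorm_entropy S (\<lambda>a. x a + y a)"
proof -
  have "(x a + y a) * ln ((x a + y a) / (sum x S + sum y S))
      \<le> x a * ln (x a / sum x S) + y a * ln (y a / sum y S)" if "a \<in> S" for a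
    using assms that by (intro log_sum_inequality2 member_le_sum) auto
  then have "(\<Sum>a\<in>S. (x a + y a) * ln ((x a + y a) / (sum x S + sum y S)))
      \<le> (\<Sum>a\<in>S. x a * ln (x a / sum x S) + y a * ln (y a / sum y S))"
    by (rule sum_mono)
  then show ?thesis
    unfolding unnorm_entropy_def by (simp add: sum.distrib)
qed

lemma unnorm_entropy_mono:
  assumes "finite S" "\<And>a. a \<in> S \<Longrightarrow> 0 \<le> x a" "\<And>a. a \<in> S \<Longrightarrow> x a \<le> y a"
  shows "unnorm_entropy S x \<le> unnorm_entropy S y"
proof -
  have "unnorm_entropy S x + unnorm_entropy S (\<lambda>a. y a - x a) \<le> unnorm_entropy S y"
    using assms unnorm_entropy_superadditive[of S x "\<lambda>a. y a - x a"] by simp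
  moreover have "0 \<le> unnorm_entropy S (\<lambda>a. y a - x a)"
    using assms by (intro unnorm_entropy_nonneg) auto
  ultimately show ?thesis by simp
qed

lemma unnorm_entropy_sum_le:
  assumes "finite I" "finite S" "\<And>n a. a \<in> S \<Longrightarrow> 0 \<le> p n a"
  shows "(\<Sum>n\<in>I. unnorm_entropy S (p n)) \<le> unnorm_entropy S (\<lambda>a. \<Sum>n\<in>I. p n a)"
  using assms(1)
proof (induction I rule: finite_induct)
  case empty
  then show ?case by (simp add: unnorm_entropy_def)
next
  case (insert n I)
  have "(\<Sum>m\<in>insert n I. unnorm_entropy S (p m))
      \<le> unnorm_entropy S (p n) + unnorm_entropy S (\<lambda>a. \<Sum>m\<in>I. p m a)"
    using insert by simp
  also have "\<dots> \<le> unnorm_entropy S (\<lambda>a. p n a + (\<Sum>m\<in>I. p m a))"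
    using assms by (intro unnorm_entropy_superadditive) (auto intro: sum_nonneg)
  finally show ?case
    using insert by simp
qed

lemma unnorm_entropy_plus_linear_sum_le:
  assumes "finite I" "finite S" "\<And>n a. a \<in> S \<Longrightarrow> 0 \<le> p n a" "\<And>a. a \<in> S \<Longrightarrow> 0 \<le> E a"
    and "\<And>a. a \<in> S \<Longrightarrow> (\<Sum>n\<in>I. p n a) \<le> q a"
  shows "(\<Sum>n\<in>I. unnorm_entropy S (p n) + (\<Sum>a\<in>S. p n a * E a))
      \<le> unnorm_entropy S q + (\<Sum>a\<in>S. q a * E a)"
proof -
  have "(\<Sum>n\<in>I. unnorm_entropy S (p n) + (\<Sum>a\<in>S. p n a * E a))
      = (\<Sum>n\<in>I. unnorm_entropy S (p n)) + (\<Sum>a\<in>S. (\<Sum>n\<in>I. p n a) * E a)"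
    by (simp add: sum.distrib sum_distrib_right sum.swap[of _ I])
  also have "\<dots> \<le> unnorm_entropy S (\<lambda>a. \<Sum>n\<in>I. p n a) + (\<Sum>a\<in>S. (\<Sum>n\<in>I. p n a) * E a)"
    using assms by (intro add_right_mono unnorm_entropy_sum_le)
  also have "\<dots> \<le> unnorm_entropy S q + (\<Sum>a\<in>S. q a * E a)"
    using assms by (intro add_mono unnorm_entropy_mono sum_mono mult_right_mono sum_nonneg)
  finally show ?thesis .
qed

lemma entropy_chain_rule:
  fixes p :: "'a \<Rightarrow> real" and P :: "'a \<Rightarrow> 'b \<Rightarrow> real"
  assumes "finite A" "\<And>a. a \<in> A \<Longrightarrow> 0 \<le> p a"
    and "\<And>a b. a \<in> A \<Longrightarrow> b \<in> B \<Longrightarrow> 0 \<le> P a b" and "\<And>a. a \<in> A \<Longrightarrow> sum (P a) B = 1"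
  shows "- (\<Sum>a\<in>A. \<Sum>b\<in>B. p a * P a b * ln (p a * P a b / sum p A))
      = unnorm_entropy A p - (\<Sum>a\<in>A. p a * (\<Sum>b\<in>B. P a b * ln (P a b)))"
proof -
  have split: "p a * P a b * ln (p a * P a b / sum p A)
      = P a b * (p a * ln (p a / sum p A)) + p a * (P a b * ln (P a b))"
    if "a \<in> A" "b \<in> B" for a b
  proof (cases "p a = 0 \<or> P a b = 0")
    case False
    with assms that have "0 < p a" "0 < P a b" "p a \<le> sum p A"
      by (auto intro: member_le_sum simp: order_less_le)
    then have "ln (p a * P a b / sum p A) = ln (p a / sum p A) + ln (P a b)"
      by (simp add: ln_div ln_mult)
    then show ?thesis by (simp add: algebra_simps)
  qed auto
  have "(\<Sum>a\<in>A. \<Sum>b\<in>B. p a * P a b * ln (p a * P a b / sum p A))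
      = (\<Sum>a\<in>A. sum (P a) B * (p a * ln (p a / sum p A)) + p a * (\<Sum>b\<in>B. P a b * ln (P a b)))"
    using split by (simp add: sum.distrib sum_distrib_left sum_distrib_right)
  also have "\<dots> = (\<Sum>a\<in>A. p a * ln (p a / sum p A) + p a * (\<Sum>b\<in>B. P a b * ln (P a b)))"
    using assms by simp
  finally show ?thesis
    unfolding unnorm_entropy_def by (simp add: sum.distrib)
qed

lemma sum_PiE_pair_prod:
  fixes h :: "'i \<Rightarrow> 'x \<Rightarrow> 'y \<Rightarrow> real"
  assumes "finite I" "\<And>i. i \<in> I \<Longrightarrow> finite (A i)" "\<And>i. i \<in> I \<Longrightarrow> finite (B i)"
  shows "(\<Sum>f\<in>PiE I A. \<Sum>g\<in>PiE I B. \<Prod>j\<in>I. h j (f j) (g j))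
      = (\<Prod>j\<in>I. \<Sum>x\<in>A j. \<Sum>y\<in>B j. h j x y)"
proof -
  have "(\<Prod>j\<in>I. \<Sum>x\<in>A j. \<Sum>y\<in>B j. h j x y) = (\<Prod>j\<in>I. \<Sum>p\<in>A j \<times> B j. h j (fst p) (snd p))"
    by (simp add: sum.cartesian_product case_prod_beta)
  also have "\<dots> = (\<Sum>F\<in>PiE I (\<lambda>j. A j \<times> B j). \<Prod>j\<in>I. h j (fst (F j)) (snd (F j)))"
    using assms by (intro prod_sum_PiE) auto
  also have "\<dots> = (\<Sum>fg\<in>PiE I A \<times> PiE I B. \<Prod>j\<in>I. h j (fst fg j) (snd fg j))"
    by (rule sum.reindex_bij_witness[where i = "\<lambda>fg. restrict (\<lambda>j. (fst fg j, snd fg j)) I"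
          and j = "\<lambda>F. (restrict (\<lambda>j. fst (F j)) I, restrict (\<lambda>j. snd (F j)) I)"])
       (auto simp: PiE_iff extensional_def fun_eq_iff)
  finally show ?thesis
    by (simp add: sum.cartesian_product case_prod_beta)
qed

lemma restrict_fiber_PiE:
  assumes "c \<subseteq> I" "g \<in> PiE c X"
  shows "{f\<in>PiE I X. restrict f c = g} = PiE I (\<lambda>j. if j \<in> c then {g j} else X j)"
  using assms by (auto simp: PiE_iff extensional_def fun_eq_iff split: if_splits)

lemma sum_prod_restrict_fibers:
  fixes k :: "'i \<Rightarrow> 'x \<Rightarrow> 'y \<Rightarrow> real"
  assumes "finite I" "c \<subseteq> I" "\<And>j. j \<in> I \<Longrightarrow> finite (A j)" "\<And>j. j \<in> I \<Longrightarrow> finite (B j)"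
    and "g \<in> PiE c A" "h \<in> PiE c B"
    and "\<And>j. j \<in> I - c \<Longrightarrow> (\<Sum>x\<in>A j. \<Sum>y\<in>B j. k j x y) = 1"
  shows "(\<Sum>f\<in>{f\<in>PiE I A. restrict f c = g}. \<Sum>f'\<in>{f'\<in>PiE I B. restrict f' c = h}.
            \<Prod>j\<in>I. k j (f j) (f' j))
      = (\<Prod>j\<in>c. k j (g j) (h j))"
proof -
  have "(\<Sum>f\<in>{f\<in>PiE I A. restrict f c = g}. \<Sum>f'\<in>{f'\<in>PiE I B. restrict f' c = h}.
            \<Prod>j\<in>I. k j (f j) (f' j))
      = (\<Prod>j\<in>I. \<Sum>x\<in>(if j \<in> c then {g j} else A j). \<Sum>y\<in>(if j \<in> c then {h j} else B j). k j x y)"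
    using assms by (simp add: restrict_fiber_PiE sum_PiE_pair_prod)
  also have "\<dots> = (\<Prod>j\<in>I. if j \<in> c then k j (g j) (h j) else 1)"
    using assms by (intro prod.cong) auto
  also have "\<dots> = (\<Prod>j\<in>c. k j (g j) (h j))"
    using assms by (simp add: prod.inter_restrict[symmetric] Int_absorb1)
  finally show ?thesis .
qed

lemma Pcoal_nonneg: "0 \<le> Pcoal Pt c s a s1"
  by (simp add: Pcoal_def prod_nonneg)

lemma Pcoal_le_1: "Pcoal Pt c s a s1 \<le> 1"
  unfolding Pcoal_def by (intro prod_le_1) (auto simp: pmf_le_1)

lemma Pcoal_restrict:
  assumes "restrict l c = lc" "restrict a c = ac"
  shows "Pcoal Pt c (u, l) a s1 = Pcoal Pt c (u, lc) ac s1"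
  unfolding Pcoal_def using assms by (intro prod.cong refl) auto

lemma palpha_nonneg: "0 \<le> palpha N Ob Lc Ac Pt sinit T pia n s"
  by (induction n arbitrary: s)
     (auto intro!: sum_nonneg mult_nonneg_nonneg simp: jtrans_def Pcoal_def prod_nonneg)

lemma palpha_stopped: "s \<in> T \<Longrightarrow> palpha N Ob Lc Ac Pt sinit T pia n s = 0"
  by (cases n) auto

lemma finite_agents: "finite (agents N)"
  by (simp add: agents_def)

locale stopped_process =
  fixes N :: nat and Ob :: "nat \<Rightarrow> 'o set" and Lc :: "nat \<Rightarrow> 'l set" and Ac :: "nat \<Rightarrow> 'a set"
    and Pt :: "nat \<Rightarrow> 'o \<times> 'l \<Rightarrow> 'a \<Rightarrow> ('o \<times> 'l) pmf"
    and sinit :: "('o,'l) jstate" and T :: "('o,'l) jstate set"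
    and pia :: "('o,'l) jstate \<Rightarrow> (nat \<Rightarrow> 'a) pmf"
  assumes fin: "\<forall>i\<in>agents N. finite (Ob i) \<and> finite (Lc i) \<and> finite (Ac i)"
    and trans_wf: "\<forall>i\<in>agents N. \<forall>x\<in>Ob i \<times> Lc i. \<forall>b\<in>Ac i. set_pmf (Pt i x b) \<subseteq> Ob i \<times> Lc i"
    and pia_wf: "\<forall>s\<in>jstates N Ob Lc. set_pmf (pia s) \<subseteq> jacts N Ac"
    and occ_summable: "\<forall>s\<in>jstates N Ob Lc - T. \<forall>a\<in>jacts N Ac.
          summable (\<lambda>n. occ N Ob Lc Ac Pt sinit T pia n s a)"
begin

definition local_fiber :: "nat set \<Rightarrow> (nat \<Rightarrow> 'l) \<Rightarrow> (nat \<Rightarrow> 'l) set" where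
  "local_fiber c lc = {l\<in>PiE (agents N) Lc. restrict l c = lc}"

definition action_fiber :: "nat set \<Rightarrow> (nat \<Rightarrow> 'a) \<Rightarrow> (nat \<Rightarrow> 'a) set" where
  "action_fiber c ac = {a\<in>jacts N Ac. restrict a c = ac}"

text \<open>\<open>occ_step c n u lc ac\<close> is P(O_n = u, L^c_n = lc, A^c_(n+1) = ac, E_n); its sum over
  \<open>n\<close> is the marginal occupancy measure \<open>occ_marg\<close>.\<close>
definition occ_step :: "nat set \<Rightarrow> nat \<Rightarrow> (nat \<Rightarrow> 'o) \<Rightarrow> (nat \<Rightarrow> 'l) \<Rightarrow> (nat \<Rightarrow> 'a) \<Rightarrow> real" where
  "occ_step c n u lc ac =
     (\<Sum>l\<in>local_fiber c lc. \<Sum>a\<in>action_fiber c ac. occ N Ob Lc Ac Pt sinit T pia n (u, l) a)"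

definition trans_entropy :: "nat set \<Rightarrow> (nat \<Rightarrow> 'o) \<Rightarrow> (nat \<Rightarrow> 'l) \<Rightarrow> (nat \<Rightarrow> 'a) \<Rightarrow> real" where
  "trans_entropy c u lc ac = - (\<Sum>o1c\<in>PiE c Ob. \<Sum>l1c\<in>PiE c Lc.
     Pcoal Pt c (u, lc) ac (o1c, l1c) * ln (Pcoal Pt c (u, lc) ac (o1c, l1c)))"

lemma finite_PiE_coalition:
  assumes "c \<subseteq> agents N"
  shows "finite (PiE c Ob)" "finite (PiE c Lc)" "finite (PiE c Ac)"
  using assms fin finite_agents by (auto intro!: finite_PiE dest: finite_subset)

lemma finite_jacts: "finite (jacts N Ac)"
  using finite_PiE_coalition[OF order.refl] by (simp add: jacts_def)

lemma finite_local_fiber: "finite (local_fiber c lc)"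
  using finite_PiE_coalition[OF order.refl] by (simp add: local_fiber_def)

lemma sum_pmf_Pt_eq_1:
  assumes "j \<in> agents N" "x \<in> Ob j" "y \<in> Lc j" "b \<in> Ac j"
  shows "(\<Sum>o1\<in>Ob j. \<Sum>l1\<in>Lc j. pmf (Pt j (x, y) b) (o1, l1)) = 1"
proof -
  have "(\<Sum>o1\<in>Ob j. \<Sum>l1\<in>Lc j. pmf (Pt j (x, y) b) (o1, l1)) = (\<Sum>s\<in>Ob j \<times> Lc j. pmf (Pt j (x, y) b) s)"
    by (simp add: sum.cartesian_product)
  also have "\<dots> = 1"
    using assms fin trans_wf by (intro sum_pmf_eq_1) auto
  finally show ?thesis .
qed

lemma sum_Pcoal_eq_1:
  assumes "c \<subseteq> agents N" "u \<in> PiE (agents N) Ob" "lc \<in> PiE c Lc" "ac \<in> PiE c Ac"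
  shows "(\<Sum>s1\<in>PiE c Ob \<times> PiE c Lc. Pcoal Pt c (u, lc) ac s1) = 1"
proof -
  have "finite c"
    using assms(1) finite_agents by (rule finite_subset)
  have "(\<Sum>s1\<in>PiE c Ob \<times> PiE c Lc. Pcoal Pt c (u, lc) ac s1)
      = (\<Sum>o1c\<in>PiE c Ob. \<Sum>l1c\<in>PiE c Lc. \<Prod>j\<in>c. pmf (Pt j (u j, lc j) (ac j)) (o1c j, l1c j))"
    by (simp add: Pcoal_def sum.cartesian_product')
  also have "\<dots> = (\<Prod>j\<in>c. \<Sum>x\<in>Ob j. \<Sum>y\<in>Lc j. pmf (Pt j (u j, lc j) (ac j)) (x, y))"
    using \<open>finite c\<close> assms fin by (intro sum_PiE_pair_prod) auto
  also have "\<dots> = 1"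
    using assms by (intro prod.neutral ballI sum_pmf_Pt_eq_1) (auto simp: PiE_iff)
  finally show ?thesis .
qed

lemma sum_jtrans_restrict:
  assumes "c \<subseteq> agents N" "u \<in> PiE (agents N) Ob" "l \<in> PiE (agents N) Lc" "a \<in> jacts N Ac"
    and "o1c \<in> PiE c Ob" "l1c \<in> PiE c Lc"
  shows "(\<Sum>s1\<in>{s1\<in>jstates N Ob Lc. restrict (fst s1) c = o1c \<and> restrict (snd s1) c = l1c}.
            jtrans N Pt (u, l) a s1) = Pcoal Pt c (u, l) a (o1c, l1c)"
proof -
  have "{s1\<in>jstates N Ob Lc. restrict (fst s1) c = o1c \<and> restrict (snd s1) c = l1c}
      = {f\<in>PiE (agents N) Ob. restrict f c = o1c} \<times> {g\<in>PiE (agents N) Lc. restrict g c = l1c}"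
    by (auto simp: jstates_def)
  moreover have "(\<Sum>f\<in>{f\<in>PiE (agents N) Ob. restrict f c = o1c}. \<Sum>g\<in>{g\<in>PiE (agents N) Lc. restrict g c = l1c}.
        \<Prod>j\<in>agents N. pmf (Pt j (u j, l j) (a j)) (f j, g j))
      = (\<Prod>j\<in>c. pmf (Pt j (u j, l j) (a j)) (o1c j, l1c j))"
    using assms fin finite_agents
    by (intro sum_prod_restrict_fibers sum_pmf_Pt_eq_1) (auto simp: PiE_iff jacts_def)
  ultimately show ?thesis
    by (simp add: sum.cartesian_product' jtrans_def Pcoal_def)
qed

lemma pnum_eq:
  assumes "c \<subseteq> agents N" "u \<in> PiE (agents N) Ob" "o1c \<in> PiE c Ob" "l1c \<in> PiE c Lc"
  shows "pnum N Ob Lc Ac Pt sinit T pia c n u lc ac o1c l1c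
      = occ_step c n u lc ac * Pcoal Pt c (u, lc) ac (o1c, l1c)"
proof -
  have "pnum N Ob Lc Ac Pt sinit T pia c n u lc ac o1c l1c
      = (\<Sum>l\<in>local_fiber c lc. \<Sum>a\<in>action_fiber c ac. occ N Ob Lc Ac Pt sinit T pia n (u, l) a *
          (\<Sum>s1\<in>{s1\<in>jstates N Ob Lc. restrict (fst s1) c = o1c \<and> restrict (snd s1) c = l1c}.
            jtrans N Pt (u, l) a s1))"
    by (simp add: pnum_def pjoint_def occ_def local_fiber_def action_fiber_def sum_distrib_left)
  also have "\<dots> = (\<Sum>l\<in>local_fiber c lc. \<Sum>a\<in>action_fiber c ac.
      occ N Ob Lc Ac Pt sinit T pia n (u, l) a * Pcoal Pt c (u, lc) ac (o1c, l1c))"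
    using assms
    by (intro sum.cong refl, subst sum_jtrans_restrict)
       (auto simp: local_fiber_def action_fiber_def intro!: Pcoal_restrict)
  finally show ?thesis
    by (simp add: occ_step_def sum_distrib_right)
qed

lemma pden_eq:
  assumes "c \<subseteq> agents N" "u \<in> PiE (agents N) Ob"
  shows "pden N Ob Lc Ac Pt sinit T pia c n u lc = (\<Sum>ac\<in>PiE c Ac. occ_step c n u lc ac)"
proof -
  have "(\<Sum>ac\<in>PiE c Ac. occ_step c n u lc ac)
      = (\<Sum>l\<in>local_fiber c lc. \<Sum>ac\<in>PiE c Ac. \<Sum>a\<in>action_fiber c ac. occ N Ob Lc Ac Pt sinit T pia n (u, l) a)"
    unfolding occ_step_def by (rule sum.swap)
  also have "\<dots> = (\<Sum>l\<in>local_fiber c lc. \<Sum>a\<in>jacts N Ac. occ N Ob Lc Ac Pt sinit T pia n (u, l) a)"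
    unfolding action_fiber_def
    using assms finite_jacts finite_PiE_coalition(3)[OF assms(1)]
    by (intro sum.cong refl sum.group) (auto simp: jacts_def PiE_iff)
  also have "\<dots> = (\<Sum>l\<in>local_fiber c lc. palpha N Ob Lc Ac Pt sinit T pia n (u, l))"
  proof (intro sum.cong refl)
    fix l assume "l \<in> local_fiber c lc"
    then have "(\<Sum>a\<in>jacts N Ac. pmf (pia (u, l)) a) = 1"
      using assms pia_wf finite_jacts by (intro sum_pmf_eq_1) (auto simp: local_fiber_def jstates_def)
    then show "(\<Sum>a\<in>jacts N Ac. occ N Ob Lc Ac Pt sinit T pia n (u, l) a)
        = palpha N Ob Lc Ac Pt sinit T pia n (u, l)"
      by (simp add: occ_def sum_distrib_left[symmetric])
  qed
  finally show ?thesis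
    by (simp add: pden_def local_fiber_def)
qed

lemma occ_step_nonneg: "0 \<le> occ_step c n u lc ac"
  unfolding occ_step_def occ_def by (intro sum_nonneg mult_nonneg_nonneg palpha_nonneg pmf_nonneg)

lemma trans_entropy_nonneg: "0 \<le> trans_entropy c u lc ac"
proof -
  have "x * ln x \<le> 0" if "0 \<le> x" "x \<le> 1" for x :: real
    using that by (cases "x = 0") (auto intro: mult_nonneg_nonpos)
  then show ?thesis
    unfolding trans_entropy_def by (simp add: sum_nonpos Pcoal_nonneg Pcoal_le_1)
qed

lemma pden_mult_qentropy:
  assumes "c \<subseteq> agents N" "u \<in> PiE (agents N) Ob" "lc \<in> PiE c Lc"
  shows "pden N Ob Lc Ac Pt sinit T pia c n u lc * qentropy N Ob Lc Ac Pt sinit T pia c n u lc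
      = unnorm_entropy (PiE c Ac) (occ_step c n u lc)
        + (\<Sum>ac\<in>PiE c Ac. occ_step c n u lc ac * trans_entropy c u lc ac)"
proof -
  define D where "D = pden N Ob Lc Ac Pt sinit T pia c n u lc"
  define p where "p = occ_step c n u lc"
  define P where "P ac = Pcoal Pt c (u, lc) ac" for ac
  let ?S1 = "PiE c Ob \<times> PiE c Lc"
  have D: "D = sum p (PiE c Ac)"
    using assms by (simp add: D_def p_def pden_eq)
  \<comment> \<open>For \<open>D = 0\<close> both sides vanish because \<open>x / 0 = 0\<close> and \<open>ln 0 = 0\<close>.\<close>
  have "D * qentropy N Ob Lc Ac Pt sinit T pia c n u lc
      = - (\<Sum>ac\<in>PiE c Ac. \<Sum>s1\<in>?S1. p ac * P ac s1 * ln (p ac * P ac s1 / sum p (PiE c Ac)))"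
    using assms
    by (cases "D = 0")
       (simp_all add: qentropy_def qcond_def sum_distrib_left pnum_eq sum.cartesian_product'
         flip: D_def p_def P_def D cong: sum.cong)
  also have "\<dots> = unnorm_entropy (PiE c Ac) p
      - (\<Sum>ac\<in>PiE c Ac. p ac * (\<Sum>s1\<in>?S1. P ac s1 * ln (P ac s1)))"
    using assms finite_PiE_coalition
    by (intro entropy_chain_rule)
       (auto simp: p_def P_def occ_step_nonneg Pcoal_nonneg sum_Pcoal_eq_1)
  finally show ?thesis
    by (simp add: D_def p_def P_def trans_entropy_def sum.cartesian_product' sum_negf)
qed

lemma summable_occ:
  assumes "u \<in> PiE (agents N) Ob" "l \<in> PiE (agents N) Lc" "a \<in> jacts N Ac"
  shows "summable (\<lambda>n. occ N Ob Lc Ac Pt sinit T pia n (u, l) a)"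
proof (cases "(u, l) \<in> T")
  case True
  then show ?thesis by (simp add: occ_def palpha_stopped)
next
  case False
  then show ?thesis using occ_summable assms by (auto simp: jstates_def)
qed

lemma summable_occ_step:
  assumes "u \<in> PiE (agents N) Ob"
  shows "summable (\<lambda>n. occ_step c n u lc ac)"
  unfolding occ_step_def using assms
  by (intro summable_sum summable_occ) (auto simp: local_fiber_def action_fiber_def)

lemma occ_marg_eq_suminf:
  assumes "u \<in> PiE (agents N) Ob"
  shows "occ_marg N Ob Lc Ac Pt sinit T pia c u lc ac = (\<Sum>n. occ_step c n u lc ac)"
proof -
  have summable: "summable (\<lambda>n. occ N Ob Lc Ac Pt sinit T pia n (u, l) a)"
    if "l \<in> local_fiber c lc" "a \<in> action_fiber c ac" for l a
    using assms that by (intro summable_occ) (auto simp: local_fiber_def action_fiber_def)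
  have "occ_marg N Ob Lc Ac Pt sinit T pia c u lc ac
      = (\<Sum>l\<in>{l\<in>local_fiber c lc. (u, l) \<notin> T}. \<Sum>a\<in>action_fiber c ac.
          occupancy N Ob Lc Ac Pt sinit T pia (u, l) a)"
    by (simp add: occ_marg_def local_fiber_def action_fiber_def conj_assoc)
  also have "\<dots> = (\<Sum>l\<in>local_fiber c lc. \<Sum>a\<in>action_fiber c ac.
      occupancy N Ob Lc Ac Pt sinit T pia (u, l) a)"
    using finite_local_fiber
    by (intro sum.mono_neutral_left) (auto simp: occupancy_def occ_def palpha_stopped)
  also have "\<dots> = (\<Sum>l\<in>local_fiber c lc. \<Sum>n. \<Sum>a\<in>action_fiber c ac.
      occ N Ob Lc Ac Pt sinit T pia n (u, l) a)"
    unfolding occupancy_def using summable by (intro sum.cong refl suminf_sum[symmetric]) auto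
  also have "\<dots> = (\<Sum>n. occ_step c n u lc ac)"
    unfolding occ_step_def using summable by (intro suminf_sum[symmetric] summable_sum) auto
  finally show ?thesis .
qed

lemma Gbar_eq:
  "Gbar N Ob Lc Ac Pt sinit T pia c w
    = (\<Sum>u\<in>PiE (agents N) Ob. \<Sum>lc\<in>PiE c Lc. w u *
        (unnorm_entropy (PiE c Ac) (occ_marg N Ob Lc Ac Pt sinit T pia c u lc)
         + (\<Sum>ac\<in>PiE c Ac. occ_marg N Ob Lc Ac Pt sinit T pia c u lc ac * trans_entropy c u lc ac)))"
  by (simp add: Gbar_def unnorm_entropy_def trans_entropy_def algebra_simps
      sum_distrib_left sum_subtractf sum_negf sum.distrib)

lemma Gval_eq:
  assumes "c \<subseteq> agents N"
  shows "Gval N Ob Lc Ac Pt sinit T pia c w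
    = (\<Sum>n. ennreal (\<Sum>u\<in>PiE (agents N) Ob. \<Sum>lc\<in>PiE c Lc. w u *
        (unnorm_entropy (PiE c Ac) (occ_step c n u lc)
         + (\<Sum>ac\<in>PiE c Ac. occ_step c n u lc ac * trans_entropy c u lc ac))))"
  using assms by (simp add: Gval_def mult.assoc pden_mult_qentropy cong: sum.cong)

lemma Gval_le_Gbar:
  assumes c: "c \<subseteq> agents N" and w: "\<And>u. 0 \<le> w u"
  shows "Gval N Ob Lc Ac Pt sinit T pia c w \<le> ennreal (Gbar N Ob Lc Ac Pt sinit T pia c w)"
proof -
  define F where "F u lc \<nu> = unnorm_entropy (PiE c Ac) \<nu>
    + (\<Sum>ac\<in>PiE c Ac. \<nu> ac * trans_entropy c u lc ac)" for u lc \<nu>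
  define g where "g n = (\<Sum>u\<in>PiE (agents N) Ob. \<Sum>lc\<in>PiE c Lc. w u * F u lc (occ_step c n u lc))"
    for n
  have g_nonneg: "0 \<le> g n" for n
    unfolding g_def F_def using w finite_PiE_coalition[OF c]
    by (intro sum_nonneg mult_nonneg_nonneg add_nonneg_nonneg unnorm_entropy_nonneg
        occ_step_nonneg trans_entropy_nonneg)
  have "(\<Sum>n<M. g n) \<le> Gbar N Ob Lc Ac Pt sinit T pia c w" for M
  proof -
    have "(\<Sum>n<M. g n)
        = (\<Sum>u\<in>PiE (agents N) Ob. \<Sum>lc\<in>PiE c Lc. w u * (\<Sum>n<M. F u lc (occ_step c n u lc)))"
      unfolding g_def by (simp add: sum_distrib_left sum.swap[of _ "{..<M}"])
    also have "\<dots> \<le> (\<Sum>u\<in>PiE (agents N) Ob. \<Sum>lc\<in>PiE c Lc.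
        w u * F u lc (occ_marg N Ob Lc Ac Pt sinit T pia c u lc))"
    proof (intro sum_mono mult_left_mono w)
      fix u lc assume "u \<in> PiE (agents N) Ob"
      then have "(\<Sum>n<M. occ_step c n u lc ac) \<le> occ_marg N Ob Lc Ac Pt sinit T pia c u lc ac" for ac
        by (auto simp: occ_marg_eq_suminf intro!: sum_le_suminf summable_occ_step occ_step_nonneg)
      then show "(\<Sum>n<M. F u lc (occ_step c n u lc)) \<le> F u lc (occ_marg N Ob Lc Ac Pt sinit T pia c u lc)"
        unfolding F_def using finite_PiE_coalition[OF c]
        by (intro unnorm_entropy_plus_linear_sum_le occ_step_nonneg trans_entropy_nonneg) auto
    qed
    also have "\<dots> = Gbar N Ob Lc Ac Pt sinit T pia c w"
      by (simp add: Gbar_eq F_def)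
    finally show ?thesis .
  qed
  then have "(\<Sum>n<M. ennreal (g n)) \<le> ennreal (Gbar N Ob Lc Ac Pt sinit T pia c w)" for M
    using g_nonneg by (simp add: ennreal_leI)
  then have "(\<Sum>n. ennreal (g n)) \<le> ennreal (Gbar N Ob Lc Ac Pt sinit T pia c w)"
    by (intro suminf_le_const summableI)
  then show ?thesis
    using c by (simp add: Gval_eq g_def F_def)
qed

end

theorem proposition2:
  fixes N K :: nat
    and Ob :: "nat \<Rightarrow> 'o set" and Lc :: "nat \<Rightarrow> 'l set" and Ac :: "nat \<Rightarrow> 'a set"
    and Pt :: "nat \<Rightarrow> 'o \<times> 'l \<Rightarrow> 'a \<Rightarrow> ('o \<times> 'l) pmf"
    and sinit :: "('o,'l) jstate"
    and Starget Savoid :: "('o,'l) jstate set"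
    and pic :: "(nat \<Rightarrow> 'o) \<Rightarrow> nat set pmf"
    and pia :: "('o,'l) jstate \<Rightarrow> (nat \<Rightarrow> 'a) pmf"
  assumes N_pos: "N \<ge> 1"
    and fin: "\<forall>i\<in>agents N. finite (Ob i) \<and> finite (Lc i) \<and> finite (Ac i)"
    and trans_wf: "\<forall>i\<in>agents N. \<forall>x\<in>Ob i \<times> Lc i. \<forall>b\<in>Ac i. set_pmf (Pt i x b) \<subseteq> Ob i \<times> Lc i"
    and init: "sinit \<in> jstates N Ob Lc"
    and K_le: "K \<le> N"
    and tgt: "Starget \<subseteq> jstates N Ob Lc" and avd: "Savoid \<subseteq> jstates N Ob Lc"
    and disj: "Starget \<inter> Savoid = {}"
    and pic_wf: "\<forall>u\<in>PiE (agents N) Ob. set_pmf (pic u) \<subseteq> Acomm N K"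
    and pia_wf: "\<forall>s\<in>jstates N Ob Lc. set_pmf (pia s) \<subseteq> jacts N Ac"
    and occ_finite: "\<forall>s\<in>jstates N Ob Lc - (Starget \<union> Savoid). \<forall>a\<in>jacts N Ac.
          summable (\<lambda>n. occ N Ob Lc Ac Pt sinit (Starget \<union> Savoid) pia n s a)"
  shows "(\<forall>i\<in>agents N.
            Gval N Ob Lc Ac Pt sinit (Starget \<union> Savoid) pia {i} (\<lambda>u. wprime N K pic u i)
            \<le> ennreal (Gbar N Ob Lc Ac Pt sinit (Starget \<union> Savoid) pia {i} (\<lambda>u. wprime N K pic u i)))
       \<and> (\<forall>c\<in>Acomm N K.
            Gval N Ob Lc Ac Pt sinit (Starget \<union> Savoid) pia c (\<lambda>u. wdprime pic u c)
            \<le> ennreal (Gbar N Ob Lc Ac Pt sinit (Starget \<union> Savoid) pia c (\<lambda>u. wdprime pic u c)))"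
proof -
  interpret stopped_process N Ob Lc Ac Pt sinit "Starget \<union> Savoid" pia
    using fin trans_wf pia_wf occ_finite by unfold_locales
  show ?thesis
    by (auto intro!: Gval_le_Gbar sum_nonneg simp: wprime_def wdprime_def Acomm_def)
qed

end
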